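(* Let $\mathcal{M}_i=(E_i,\rho_i)$, $i=1,2$, be $q$-matroids with sets of cyclic flats $\mathcal{Z}_i$, and let $\rho$ be the rank function of $\mathcal{M}_1\oplus\mathcal{M}_2$ on $E=E_1\oplus E_2$. Then for all $V\le E$, \[ \rho(V)=\min_{Z_1\in\mathcal{Z}_1,\,Z_2\in\mathcal{Z}_2}\Big(\rho(Z_1\oplus Z_2)+\dim\big((V+Z_1\oplus Z_2)/(Z_1\oplus Z_2)\big)\Big). \]
   Context: Let $\mathbb{F}=\mathbb{F}_q$. A $q$-matroid is $\mathcal{M}=(E,\rho)$, $E$ a finite-dimensional $\mathbb{F}$-vector space, $\rho$ from subspaces to $\mathbb{Z}_{\ge0}$ with $0\le\rho(V)\le\dim V$, monotone and submodular. Flat: $\rho(F+\langle x\rangle)>\rho(F)$ for all $x\notin F$. Cyclic core: $\mathrm{cyc}(V)=\{x\in V\mid\rho(W)=\rho(V)\text{ for all }W\le V\text{ with }W+\langle x\rangle=V\}$; cyclic: $\mathrm{cyc}(V)=V$; a cyclic flat is a flat that is cyclic. Direct sum: for $E=E_1\oplus E_2$ with projections $\pi_i$, $\mathcal{M}_1\oplus\mathcal{M}_2=(E,\rho)$ where $\rho(V)=\dim V+\min_{X\le V}(\rho_1(\pi_1(X))+\rho_2(\pi_2(X))-\dim X)$. *)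

theory Defs
  imports Complex_Main "HOL-Library.Product_Plus"
begin

text \<open>A vector space over the scalar field 'f is given by a scaling function
  s :: 'f \<Rightarrow> 'v \<Rightarrow> 'v on the type 'v (the whole type is the space E).\<close>

definition ssum :: "'v::ab_group_add set \<Rightarrow> 'v set \<Rightarrow> 'v set" where
  "ssum V W = {x + y | x y. x \<in> V \<and> y \<in> W}"

definition qmatroid :: "('f::field \<Rightarrow> 'v::ab_group_add \<Rightarrow> 'v) \<Rightarrow> ('v set \<Rightarrow> nat) \<Rightarrow> bool" where
  "qmatroid s \<rho> \<longleftrightarrow>
     vector_space s \<and>
     (\<exists>B. finite B \<and> module.span s B = UNIV) \<and>
     (\<forall>V. module.subspace s V \<longrightarrow> \<rho> V \<le> vector_space.dim s V) \<and>
     (\<forall>V W. module.subspace s V \<and> module.subspace s W \<and> V \<subseteq> W \<longrightarrow> \<rho> V \<le> \<rho> W) \<and>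
     (\<forall>V W. module.subspace s V \<and> module.subspace s W \<longrightarrow>
        \<rho> (ssum V W) + \<rho> (V \<inter> W) \<le> \<rho> V + \<rho> W)"

definition is_flat :: "('f::field \<Rightarrow> 'v::ab_group_add \<Rightarrow> 'v) \<Rightarrow> ('v set \<Rightarrow> nat) \<Rightarrow> 'v set \<Rightarrow> bool" where
  "is_flat s \<rho> F \<longleftrightarrow> module.subspace s F \<and>
     (\<forall>x. x \<notin> F \<longrightarrow> \<rho> (ssum F (module.span s {x})) > \<rho> F)"

definition cyc :: "('f::field \<Rightarrow> 'v::ab_group_add \<Rightarrow> 'v) \<Rightarrow> ('v set \<Rightarrow> nat) \<Rightarrow> 'v set \<Rightarrow> 'v set" where
  "cyc s \<rho> V = {x \<in> V. \<forall>W. module.subspace s W \<and> W \<subseteq> V \<and> ssum W (module.span s {x}) = V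
                            \<longrightarrow> \<rho> W = \<rho> V}"

definition is_cyclic :: "('f::field \<Rightarrow> 'v::ab_group_add \<Rightarrow> 'v) \<Rightarrow> ('v set \<Rightarrow> nat) \<Rightarrow> 'v set \<Rightarrow> bool" where
  "is_cyclic s \<rho> V \<longleftrightarrow> cyc s \<rho> V = V"

definition cyclic_flats :: "('f::field \<Rightarrow> 'v::ab_group_add \<Rightarrow> 'v) \<Rightarrow> ('v set \<Rightarrow> nat) \<Rightarrow> 'v set set" where
  "cyclic_flats s \<rho> = {Z. is_flat s \<rho> Z \<and> is_cyclic s \<rho> Z}"

text \<open>Scaling on the external direct sum E1 \<oplus> E2, realised as the product type.\<close>
definition prod_scale :: "('f \<Rightarrow> 'v1 \<Rightarrow> 'v1) \<Rightarrow> ('f \<Rightarrow> 'v2 \<Rightarrow> 'v2) \<Rightarrow> 'f \<Rightarrow> 'v1 \<times> 'v2 \<Rightarrow> 'v1 \<times> 'v2" where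
  "prod_scale s1 s2 c p = (s1 c (fst p), s2 c (snd p))"

text \<open>Since dim X \<le> dim V, the quantity is computed in nat without truncation.\<close>
definition dsum_rank ::
  "('f::field \<Rightarrow> 'v1::ab_group_add \<Rightarrow> 'v1) \<Rightarrow> ('v1 set \<Rightarrow> nat) \<Rightarrow>
   ('f \<Rightarrow> 'v2::ab_group_add \<Rightarrow> 'v2) \<Rightarrow> ('v2 set \<Rightarrow> nat) \<Rightarrow> ('v1 \<times> 'v2) set \<Rightarrow> nat" where
  "dsum_rank s1 \<rho>1 s2 \<rho>2 V =
     Min {vector_space.dim (prod_scale s1 s2) V + \<rho>1 (fst ` X) + \<rho>2 (snd ` X)
            - vector_space.dim (prod_scale s1 s2) X
          | X. module.subspace (prod_scale s1 s2) X \<and> X \<subseteq> V}"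

text \<open>Dimension of the quotient space A / B for B \<le> A (finite-dimensional): dim A - dim B.\<close>
definition quot_dim :: "('f::field \<Rightarrow> 'v::ab_group_add \<Rightarrow> 'v) \<Rightarrow> 'v set \<Rightarrow> 'v set \<Rightarrow> nat" where
  "quot_dim s A B = vector_space.dim s A - vector_space.dim s B"

end

(*
  For a single q-matroid, rho(A) <= rho(Z) + dim((A + Z)/Z) for every subspace Z, and a cyclic
  flat attains the bound: take Z lexicographically minimising (rho(Z) + dim(A/(A \<inter> Z)), rho(Z),
  -dim Z).  A rank-preserving extension Z + <x> of Z would beat it in the last component, a
  hyperplane W of Z with W + <x> = Z and rho(W) < rho(Z) in the second one.

  For the direct sum the same upper bound holds with Z = Z1 \<oplus> Z2, since rho is monotone and
  grows at most by the codimension.  Conversely, write rho(V) = dim V + rho1(pi1 X) + rho2(pi2 X) - dim X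
  for an optimal X <= V, pick cyclic flats Z_i attaining the bound for pi_i X, and combine
  rho(Z1 \<oplus> Z2) <= rho1(Z1) + rho2(Z2) with X + Z1 \<oplus> Z2 <= (pi1 X + Z1) \<oplus> (pi2 X + Z2).
*)

theory Submission
  imports Defs "HOL-Analysis.Product_Vector" "HOL-Library.Product_Lexorder"
begin

lemma ex_has_least_wellorder:
  fixes m :: "'a \<Rightarrow> 'b::wellorder"
  assumes "P k"
  shows "\<exists>x. P x \<and> (\<forall>y. P y \<longrightarrow> m x \<le> m y)"
proof -
  let ?n = "LEAST n. \<exists>x. P x \<and> m x = n"
  obtain x where "P x" "m x = ?n"
    using LeastI_ex[of "\<lambda>n. \<exists>x. P x \<and> m x = n"] assms by blast
  moreover have "?n \<le> m y" if "P y" for y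
    using that by (blast intro: Least_le)
  ultimately show ?thesis by auto
qed

lemma ssum_upper1: "(0::'a::ab_group_add) \<in> W \<Longrightarrow> V \<subseteq> ssum V W"
  unfolding ssum_def by force

lemma ssum_upper2: "(0::'a::ab_group_add) \<in> V \<Longrightarrow> W \<subseteq> ssum V W"
  unfolding ssum_def by force

context vector_space
begin

lemma subspace_ssum: "subspace V \<Longrightarrow> subspace W \<Longrightarrow> subspace (ssum V W)"
  unfolding ssum_def by (rule subspace_sums)

lemma ssum_least: "subspace U \<Longrightarrow> V \<subseteq> U \<Longrightarrow> W \<subseteq> U \<Longrightarrow> ssum V W \<subseteq> U"
  unfolding ssum_def using subspace_add by blast

lemma ssum_span_singleton:
  assumes "subspace W"
  shows "ssum W (span {x}) = span (insert x W)"
proof -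
  have "span W = W" using assms by simp
  with span_Un[of W "{x}"] have "span (insert x W) = {a + b | a b. a \<in> W \<and> b \<in> span {x}}"
    by simp
  then show ?thesis by (simp add: ssum_def)
qed

end

context finite_dimensional_vector_space
begin

lemma dim_ssum_span_singleton:
  "subspace W \<Longrightarrow> x \<notin> W \<Longrightarrow> dim (ssum W (span {x})) = dim W + 1"
  by (simp add: ssum_span_singleton dim_insert span_eq_iff[THEN iffD2])

lemma quot_dim_ssum:
  assumes "subspace A" "subspace Z"
  shows "quot_dim scale (ssum A Z) Z = dim A - dim (A \<inter> Z)"
  using dim_sums_Int[OF assms] unfolding quot_dim_def ssum_def by simp

lemma dim_Int_add_le:
  assumes A: "subspace A" and W: "subspace W" and Z: "subspace Z" and "W \<subseteq> Z"
  shows "dim (A \<inter> Z) + dim W \<le> dim (A \<inter> W) + dim Z"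
proof -
  have AZ: "subspace (A \<inter> Z)" using A Z by (rule subspace_inter)
  have "ssum (A \<inter> Z) W \<subseteq> Z" using Z _ \<open>W \<subseteq> Z\<close> by (rule ssum_least) blast
  then have "dim (ssum (A \<inter> Z) W) \<le> dim Z" by (rule dim_subset)
  moreover have "A \<inter> Z \<inter> W = A \<inter> W" using \<open>W \<subseteq> Z\<close> by blast
  then have "dim (A \<inter> Z \<inter> W) = dim (A \<inter> W)" by simp
  ultimately show ?thesis using dim_sums_Int[OF AZ W] unfolding ssum_def by linarith
qed

end

lemma finite_span_imp_finite_dimensional:
  assumes "vector_space s" and "finite B\<^sub>0" and "module.span s B\<^sub>0 = UNIV"
  shows "\<exists>B. finite_dimensional_vector_space s B"
proof -
  interpret vector_space s by fact
  obtain B where B: "independent B" "UNIV \<subseteq> span B"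
    using basis_exists[of UNIV] by metis
  have "finite B" using independent_span_bound[OF assms(2) B(1)] assms(3) by auto
  then have "finite_dimensional_vector_space s B"
    using B by unfold_locales auto
  then show ?thesis by blast
qed

lemma qmatroid_finite_dimensional: "qmatroid s \<rho> \<Longrightarrow> \<exists>B. finite_dimensional_vector_space s B"
  unfolding qmatroid_def using finite_span_imp_finite_dimensional by metis

locale finite_dimensional_qmatroid = finite_dimensional_vector_space scale Basis
  for scale :: "'f::field \<Rightarrow> 'v::ab_group_add \<Rightarrow> 'v" and Basis :: "'v set" +
  fixes \<rho> :: "'v set \<Rightarrow> nat"
  assumes qmatroid: "qmatroid scale \<rho>"
begin

lemma rank_le_dim: "subspace V \<Longrightarrow> \<rho> V \<le> dim V"
  using qmatroid unfolding qmatroid_def by blast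

lemma rank_mono: "subspace V \<Longrightarrow> subspace W \<Longrightarrow> V \<subseteq> W \<Longrightarrow> \<rho> V \<le> \<rho> W"
  using qmatroid unfolding qmatroid_def by blast

lemma rank_submodular:
  "subspace V \<Longrightarrow> subspace W \<Longrightarrow> \<rho> (ssum V W) + \<rho> (V \<inter> W) \<le> \<rho> V + \<rho> W"
  using qmatroid unfolding qmatroid_def by blast

lemma rank_ssum_span_singleton_le: "subspace W \<Longrightarrow> \<rho> (ssum W (span {x})) \<le> \<rho> W + 1"
  using rank_submodular[of W "span {x}"] rank_le_dim[of "span {x}"] by (simp split: if_splits)

text \<open>Ordered lexicographically; the last component (not truncated, as \<open>dim Z \<le> dimension\<close>)
  prefers larger subspaces.\<close>

definition lex_key :: "'v set \<Rightarrow> 'v set \<Rightarrow> nat \<times> nat \<times> nat" where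
  "lex_key A Z = (\<rho> Z + (dim A - dim (A \<inter> Z)), \<rho> Z, dimension - dim Z)"

lemma is_flat_if_lex_key_minimal:
  assumes Z: "subspace Z" and min: "\<And>Y. subspace Y \<Longrightarrow> lex_key A Z \<le> lex_key A Y"
  shows "is_flat scale \<rho> Z"
proof -
  have "\<rho> Z < \<rho> (ssum Z (span {x}))" if "x \<notin> Z" for x
  proof (rule ccontr)
    define Z' where "Z' = ssum Z (span {x})"
    assume "\<not> \<rho> Z < \<rho> (ssum Z (span {x}))"
    moreover have Z': "subspace Z'"
      unfolding Z'_def using Z subspace_span by (rule subspace_ssum)
    moreover have "Z \<subseteq> Z'"
      unfolding Z'_def using span_zero by (rule ssum_upper1)
    ultimately have "\<rho> Z' = \<rho> Z" using rank_mono[OF Z] unfolding Z'_def by fastforce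
    moreover have "dim Z' = dim Z + 1"
      unfolding Z'_def using Z \<open>x \<notin> Z\<close> by (rule dim_ssum_span_singleton)
    moreover have "dim (A \<inter> Z) \<le> dim (A \<inter> Z')" using \<open>Z \<subseteq> Z'\<close> by (intro dim_subset) blast
    moreover have "dim (A \<inter> Z') \<le> dim A" by (intro dim_subset) blast
    moreover have "dim Z' \<le> dimension" by (rule dim_subset_UNIV)
    ultimately have "lex_key A Z' < lex_key A Z"
      unfolding lex_key_def by (auto simp: less_prod_def)
    then show False using min[OF Z'] by simp
  qed
  then show ?thesis unfolding is_flat_def using Z by blast
qed

lemma is_cyclic_if_lex_key_minimal:
  assumes A: "subspace A" and Z: "subspace Z"
    and min: "\<And>Y. subspace Y \<Longrightarrow> lex_key A Z \<le> lex_key A Y"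
  shows "is_cyclic scale \<rho> Z"
proof -
  have "\<rho> W = \<rho> Z" if W: "subspace W" "W \<subseteq> Z" and Z_eq: "ssum W (span {x}) = Z" for W x
  proof (cases "x \<in> W")
    case True
    then have "Z = W"
      using W(1) by (simp flip: Z_eq add: ssum_span_singleton span_redundant span_eq_iff[THEN iffD2])
    then show ?thesis by simp
  next
    case False
    have "dim Z = dim W + 1" using dim_ssum_span_singleton[OF W(1) False] by (simp add: Z_eq)
    moreover have "\<rho> Z \<le> \<rho> W + 1" using rank_ssum_span_singleton_le[OF W(1), of x] by (simp add: Z_eq)
    moreover have "\<rho> W \<le> \<rho> Z" using rank_mono[OF W(1) Z W(2)] .
    moreover have "dim (A \<inter> Z) + dim W \<le> dim (A \<inter> W) + dim Z"
      using A W(1) Z W(2) by (rule dim_Int_add_le)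
    moreover have "dim (A \<inter> Z) \<le> dim A" "dim (A \<inter> W) \<le> dim A" by (intro dim_subset; blast)+
    ultimately have "\<rho> W < \<rho> Z \<Longrightarrow> lex_key A W < lex_key A Z"
      unfolding lex_key_def by (auto simp: less_prod_def)
    then show ?thesis using min[OF W(1)] \<open>\<rho> W \<le> \<rho> Z\<close> by fastforce
  qed
  then show ?thesis unfolding is_cyclic_def cyc_def by blast
qed

lemma ex_cyclic_flat_rank_le:
  assumes A: "subspace A"
  shows "\<exists>Z \<in> cyclic_flats scale \<rho>. \<rho> Z + quot_dim scale (ssum A Z) Z \<le> \<rho> A"
proof -
  obtain Z where Z: "subspace Z" and min: "\<And>Y. subspace Y \<Longrightarrow> lex_key A Z \<le> lex_key A Y"
    using ex_has_least_wellorder[of subspace A "lex_key A"] A by blast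
  have "Z \<in> cyclic_flats scale \<rho>"
    unfolding cyclic_flats_def
    using is_flat_if_lex_key_minimal[OF Z min] is_cyclic_if_lex_key_minimal[OF A Z min] by blast
  moreover have "\<rho> Z + (dim A - dim (A \<inter> Z)) \<le> \<rho> A"
    using min[OF A] by (auto simp: lex_key_def less_eq_prod_def)
  ultimately show ?thesis using quot_dim_ssum[OF A Z] by (intro bexI[of _ Z]) simp_all
qed

end

lemma (in module_prod) scale_eq_prod_scale: "scale = prod_scale s1 s2"
  by (simp add: fun_eq_iff scale_def prod_scale_def)

locale qmatroid_pair =
  M1: finite_dimensional_qmatroid s1 B1 \<rho>1 + M2: finite_dimensional_qmatroid s2 B2 \<rho>2
  for s1 :: "'f::field \<Rightarrow> 'v1::ab_group_add \<Rightarrow> 'v1" and B1 \<rho>1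
    and s2 :: "'f \<Rightarrow> 'v2::ab_group_add \<Rightarrow> 'v2" and B2 \<rho>2
begin

sublocale finite_dimensional_vector_space_prod s1 s2 B1 B2
  rewrites "module_prod.scale s1 s2 = prod_scale s1 s2"
proof -
  show "finite_dimensional_vector_space_prod s1 s2 B1 B2" by unfold_locales
  then interpret finite_dimensional_vector_space_prod s1 s2 B1 B2 .
  show "module_prod.scale s1 s2 = prod_scale s1 s2" by (rule scale_eq_prod_scale)
qed

abbreviation \<rho> :: "('v1 \<times> 'v2) set \<Rightarrow> nat" where
  "\<rho> \<equiv> dsum_rank s1 \<rho>1 s2 \<rho>2"

definition dsum_rank_term :: "('v1 \<times> 'v2) set \<Rightarrow> ('v1 \<times> 'v2) set \<Rightarrow> nat" where
  "dsum_rank_term V X = p.dim V + \<rho>1 (fst ` X) + \<rho>2 (snd ` X) - p.dim X"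

lemma subspace_fst_image: "p.subspace X \<Longrightarrow> M1.subspace (fst ` X)"
  by (metis linear_fst linear_iff_module_hom module_hom.subspace_image)

lemma subspace_snd_image: "p.subspace X \<Longrightarrow> M2.subspace (snd ` X)"
  by (metis linear_snd linear_iff_module_hom module_hom.subspace_image)

lemma finite_dsum_rank_terms: "finite {dsum_rank_term V X | X. p.subspace X \<and> X \<subseteq> V}"
proof (rule finite_subset)
  show "{dsum_rank_term V X | X. p.subspace X \<and> X \<subseteq> V}
      \<subseteq> {..p.dim V + M1.dimension + M2.dimension}"
  proof clarify
    fix X assume "p.subspace X"
    then have "\<rho>1 (fst ` X) \<le> M1.dimension" "\<rho>2 (snd ` X) \<le> M2.dimension"
      using M1.rank_le_dim[OF subspace_fst_image] M2.rank_le_dim[OF subspace_snd_image]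
        M1.dim_subset_UNIV M2.dim_subset_UNIV by (meson order_trans)+
    then show "dsum_rank_term V X \<le> p.dim V + M1.dimension + M2.dimension"
      unfolding dsum_rank_term_def by linarith
  qed
qed simp

lemma dsum_rank_le_term: "p.subspace X \<Longrightarrow> X \<subseteq> V \<Longrightarrow> \<rho> V \<le> dsum_rank_term V X"
  unfolding dsum_rank_def dsum_rank_term_def[symmetric]
  by (rule Min_le[OF finite_dsum_rank_terms]) blast

lemma dsum_rank_attained:
  assumes "p.subspace V"
  obtains X where "p.subspace X" "X \<subseteq> V" "\<rho> V = dsum_rank_term V X"
proof -
  have "{0} \<subseteq> V" using p.subspace_0[OF assms] by simp
  then have "{dsum_rank_term V X | X. p.subspace X \<and> X \<subseteq> V} \<noteq> {}"
    using p.subspace_single_0 by blast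
  from Min_in[OF finite_dsum_rank_terms this] show ?thesis
    using that unfolding dsum_rank_def dsum_rank_term_def[symmetric] by blast
qed

lemma dsum_rank_Times_le:
  assumes "M1.subspace Z1" "M2.subspace Z2"
  shows "\<rho> (Z1 \<times> Z2) \<le> \<rho>1 Z1 + \<rho>2 Z2"
proof -
  have "\<rho> (Z1 \<times> Z2) \<le> dsum_rank_term (Z1 \<times> Z2) (Z1 \<times> Z2)"
    using subspace_Times[OF assms] by (rule dsum_rank_le_term) simp
  moreover have "Z1 \<noteq> {}" "Z2 \<noteq> {}" using M1.subspace_0[OF assms(1)] M2.subspace_0[OF assms(2)] by auto
  ultimately show ?thesis unfolding dsum_rank_term_def by simp
qed

lemma dsum_rank_mono:
  assumes V: "p.subspace V" and W: "p.subspace W" and "V \<subseteq> W"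
  shows "\<rho> V \<le> \<rho> W"
proof -
  obtain X where X: "p.subspace X" "X \<subseteq> W" "\<rho> W = dsum_rank_term W X"
    using dsum_rank_attained[OF W] .
  have XV: "p.subspace (X \<inter> V)" using X(1) V by (rule p.subspace_inter)
  have "\<rho>1 (fst ` (X \<inter> V)) \<le> \<rho>1 (fst ` X)"
    using subspace_fst_image[OF XV] subspace_fst_image[OF X(1)] by (rule M1.rank_mono) blast
  moreover have "\<rho>2 (snd ` (X \<inter> V)) \<le> \<rho>2 (snd ` X)"
    using subspace_snd_image[OF XV] subspace_snd_image[OF X(1)] by (rule M2.rank_mono) blast
  moreover have "p.dim X + p.dim V \<le> p.dim (X \<inter> V) + p.dim W"
    using p.dim_Int_add_le[OF X(1) V W \<open>V \<subseteq> W\<close>] X(2) by (simp add: Int_absorb2)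
  moreover have "p.dim X \<le> p.dim W" "p.dim (X \<inter> V) \<le> p.dim V"
    using X(2) by (auto intro: p.dim_subset)
  ultimately have "dsum_rank_term V (X \<inter> V) \<le> dsum_rank_term W X"
    unfolding dsum_rank_term_def by linarith
  moreover have "\<rho> V \<le> dsum_rank_term V (X \<inter> V)" using XV by (rule dsum_rank_le_term) blast
  ultimately show ?thesis using X(3) by linarith
qed

lemma dsum_rank_le_add_quot_dim:
  assumes A: "p.subspace A" and B: "p.subspace B" and "B \<subseteq> A"
  shows "\<rho> A \<le> \<rho> B + quot_dim (prod_scale s1 s2) A B"
proof -
  obtain X where X: "p.subspace X" "X \<subseteq> B" "\<rho> B = dsum_rank_term B X"
    using dsum_rank_attained[OF B] .
  have "\<rho> A \<le> dsum_rank_term A X" using X(1) by (rule dsum_rank_le_term) (use X(2) \<open>B \<subseteq> A\<close> in blast)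
  moreover have "p.dim X \<le> p.dim B" "p.dim B \<le> p.dim A"
    using X(2) \<open>B \<subseteq> A\<close> by (auto intro: p.dim_subset)
  ultimately show ?thesis using X(3) unfolding dsum_rank_term_def quot_dim_def by linarith
qed

lemma dsum_rank_le_ssum_quot_dim:
  assumes V: "p.subspace V" and Z: "p.subspace Z"
  shows "\<rho> V \<le> \<rho> Z + quot_dim (prod_scale s1 s2) (ssum V Z) Z"
proof -
  have VZ: "p.subspace (ssum V Z)" using V Z by (rule p.subspace_ssum)
  have "\<rho> V \<le> \<rho> (ssum V Z)"
    using V VZ by (rule dsum_rank_mono) (rule ssum_upper1[OF p.subspace_0[OF Z]])
  also have "\<dots> \<le> \<rho> Z + quot_dim (prod_scale s1 s2) (ssum V Z) Z"
    using VZ Z by (rule dsum_rank_le_add_quot_dim) (rule ssum_upper2[OF p.subspace_0[OF V]])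
  finally show ?thesis .
qed

lemma ex_cyclic_flats_dsum_rank_ge:
  assumes V: "p.subspace V"
  shows "\<exists>Z1 \<in> cyclic_flats s1 \<rho>1. \<exists>Z2 \<in> cyclic_flats s2 \<rho>2.
    \<rho> (Z1 \<times> Z2) + quot_dim (prod_scale s1 s2) (ssum V (Z1 \<times> Z2)) (Z1 \<times> Z2) \<le> \<rho> V"
proof -
  obtain X where X: "p.subspace X" "X \<subseteq> V" "\<rho> V = dsum_rank_term V X"
    using dsum_rank_attained[OF V] .
  let ?X1 = "fst ` X" and ?X2 = "snd ` X"
  have X1: "M1.subspace ?X1" and X2: "M2.subspace ?X2"
    using X(1) by (rule subspace_fst_image, rule subspace_snd_image)
  obtain Z1 where Z1: "Z1 \<in> cyclic_flats s1 \<rho>1" "\<rho>1 Z1 + quot_dim s1 (ssum ?X1 Z1) Z1 \<le> \<rho>1 ?X1"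
    using M1.ex_cyclic_flat_rank_le[OF X1] by blast
  obtain Z2 where Z2: "Z2 \<in> cyclic_flats s2 \<rho>2" "\<rho>2 Z2 + quot_dim s2 (ssum ?X2 Z2) Z2 \<le> \<rho>2 ?X2"
    using M2.ex_cyclic_flat_rank_le[OF X2] by blast
  have Z1s: "M1.subspace Z1" and Z2s: "M2.subspace Z2"
    using Z1(1) Z2(1) unfolding cyclic_flats_def is_flat_def by blast+
  let ?Z = "Z1 \<times> Z2"
  have Z: "p.subspace ?Z" using Z1s Z2s by (rule subspace_Times)
  have "ssum X ?Z \<subseteq> ssum ?X1 Z1 \<times> ssum ?X2 Z2"
    unfolding ssum_def by force
  then have "p.dim (ssum X ?Z) \<le> p.dim (ssum ?X1 Z1 \<times> ssum ?X2 Z2)" by (rule p.dim_subset)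
  also have "\<dots> = M1.dim (ssum ?X1 Z1) + M2.dim (ssum ?X2 Z2)"
    using M1.subspace_ssum[OF X1 Z1s] M2.subspace_ssum[OF X2 Z2s] by (rule dim_Times)
  finally have "p.dim (ssum X ?Z) \<le> M1.dim (ssum ?X1 Z1) + M2.dim (ssum ?X2 Z2)" .
  moreover have "p.dim ?Z = M1.dim Z1 + M2.dim Z2" using Z1s Z2s by (rule dim_Times)
  moreover have "M1.dim Z1 \<le> M1.dim (ssum ?X1 Z1)"
    by (rule M1.dim_subset[OF ssum_upper2[OF M1.subspace_0[OF X1]]])
  moreover have "M2.dim Z2 \<le> M2.dim (ssum ?X2 Z2)"
    by (rule M2.dim_subset[OF ssum_upper2[OF M2.subspace_0[OF X2]]])
  ultimately have quot_X: "quot_dim (prod_scale s1 s2) (ssum X ?Z) ?Z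
      \<le> quot_dim s1 (ssum ?X1 Z1) Z1 + quot_dim s2 (ssum ?X2 Z2) Z2"
    unfolding quot_dim_def by linarith
  have "p.dim (X \<inter> ?Z) \<le> p.dim (V \<inter> ?Z)" using X(2) by (intro p.dim_subset) blast
  moreover have "p.dim (X \<inter> ?Z) \<le> p.dim X" "p.dim (V \<inter> ?Z) \<le> p.dim V"
    by (auto intro: p.dim_subset)
  ultimately have quot_V: "quot_dim (prod_scale s1 s2) (ssum V ?Z) ?Z
      \<le> quot_dim (prod_scale s1 s2) (ssum X ?Z) ?Z + (p.dim V - p.dim X)"
    unfolding p.quot_dim_ssum[OF V Z] p.quot_dim_ssum[OF X(1) Z] by linarith
  have "p.dim X \<le> p.dim V" using X(2) by (rule p.dim_subset)
  moreover have "\<rho> ?Z \<le> \<rho>1 Z1 + \<rho>2 Z2" using Z1s Z2s by (rule dsum_rank_Times_le)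
  ultimately have "\<rho> ?Z + quot_dim (prod_scale s1 s2) (ssum V ?Z) ?Z \<le> \<rho> V"
    using quot_X quot_V Z1(2) Z2(2) X(3) unfolding dsum_rank_term_def by linarith
  then show ?thesis using Z1(1) Z2(1) by blast
qed

lemma dsum_rank_eq_Min_cyclic_flats:
  assumes V: "p.subspace V"
  shows "\<rho> V = Min {\<rho> (Z1 \<times> Z2) + quot_dim (prod_scale s1 s2) (ssum V (Z1 \<times> Z2)) (Z1 \<times> Z2)
                     | Z1 Z2. Z1 \<in> cyclic_flats s1 \<rho>1 \<and> Z2 \<in> cyclic_flats s2 \<rho>2}"
    (is "_ = Min ?T")
proof (rule sym, rule Min_eqI)
  have "?T \<subseteq> {..M1.dimension + M2.dimension + p.dimension}"
  proof clarify
    fix Z1 Z2 assume "Z1 \<in> cyclic_flats s1 \<rho>1" "Z2 \<in> cyclic_flats s2 \<rho>2"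
    then have Z1: "M1.subspace Z1" and Z2: "M2.subspace Z2"
      unfolding cyclic_flats_def is_flat_def by blast+
    have "\<rho> (Z1 \<times> Z2) \<le> M1.dimension + M2.dimension"
      using dsum_rank_Times_le[OF Z1 Z2] M1.rank_le_dim[OF Z1] M2.rank_le_dim[OF Z2]
        M1.dim_subset_UNIV[of Z1] M2.dim_subset_UNIV[of Z2] by linarith
    moreover have "quot_dim (prod_scale s1 s2) (ssum V (Z1 \<times> Z2)) (Z1 \<times> Z2) \<le> p.dimension"
      unfolding quot_dim_def using p.dim_subset_UNIV by (rule le_trans[OF diff_le_self])
    ultimately show "\<rho> (Z1 \<times> Z2) + quot_dim (prod_scale s1 s2) (ssum V (Z1 \<times> Z2)) (Z1 \<times> Z2)
        \<le> M1.dimension + M2.dimension + p.dimension" by linarith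
  qed
  then show "finite ?T" by (rule finite_subset) simp
  show lower: "\<rho> V \<le> t" if "t \<in> ?T" for t
    using that dsum_rank_le_ssum_quot_dim[OF V subspace_Times]
    unfolding cyclic_flats_def is_flat_def by blast
  obtain Z1 Z2 where "Z1 \<in> cyclic_flats s1 \<rho>1" "Z2 \<in> cyclic_flats s2 \<rho>2"
    and upper: "\<rho> (Z1 \<times> Z2) + quot_dim (prod_scale s1 s2) (ssum V (Z1 \<times> Z2)) (Z1 \<times> Z2) \<le> \<rho> V"
    using ex_cyclic_flats_dsum_rank_ge[OF V] by blast
  then have attained: "\<rho> (Z1 \<times> Z2) + quot_dim (prod_scale s1 s2) (ssum V (Z1 \<times> Z2)) (Z1 \<times> Z2) \<in> ?T"
    by blast
  from upper lower[OF attained] have "\<rho> (Z1 \<times> Z2) + quot_dim (prod_scale s1 s2) (ssum V (Z1 \<times> Z2)) (Z1 \<times> Z2) = \<rho> V"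
    by (rule antisym)
  with attained show "\<rho> V \<in> ?T" by simp
qed

end

lemma qmatroid_pairI:
  assumes "qmatroid s1 \<rho>1" and "qmatroid s2 \<rho>2"
  obtains B1 B2 where "qmatroid_pair s1 B1 \<rho>1 s2 B2 \<rho>2"
proof -
  obtain B1 B2 where "finite_dimensional_vector_space s1 B1" "finite_dimensional_vector_space s2 B2"
    using qmatroid_finite_dimensional assms by metis
  with assms show ?thesis
    using that unfolding qmatroid_pair_def finite_dimensional_qmatroid_def
      finite_dimensional_qmatroid_axioms_def by blast
qed

theorem corollary5p9:
  fixes s1 :: "'f::{field,finite} \<Rightarrow> 'v1::ab_group_add \<Rightarrow> 'v1"
    and s2 :: "'f \<Rightarrow> 'v2::ab_group_add \<Rightarrow> 'v2"
    and \<rho>1 :: "'v1 set \<Rightarrow> nat" and \<rho>2 :: "'v2 set \<Rightarrow> nat"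
    and V :: "('v1 \<times> 'v2) set"
  assumes "qmatroid s1 \<rho>1" and "qmatroid s2 \<rho>2"
    and "module.subspace (prod_scale s1 s2) V"
  shows "dsum_rank s1 \<rho>1 s2 \<rho>2 V =
    Min {dsum_rank s1 \<rho>1 s2 \<rho>2 (Z1 \<times> Z2)
           + quot_dim (prod_scale s1 s2) (ssum V (Z1 \<times> Z2)) (Z1 \<times> Z2)
         | Z1 Z2. Z1 \<in> cyclic_flats s1 \<rho>1 \<and> Z2 \<in> cyclic_flats s2 \<rho>2}"
proof -
  obtain B1 B2 where "qmatroid_pair s1 B1 \<rho>1 s2 B2 \<rho>2"
    using qmatroid_pairI[OF assms(1,2)] .
  then show ?thesis using assms(3) by (rule qmatroid_pair.dsum_rank_eq_Min_cyclic_flats)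
qed

end
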